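(* Let $\mathsf{S}$ be the algebra antihomomorphism of $U_{K,L,twist}$ determined by $\mathsf{S}(K)=\overline{K}$, $\mathsf{S}(\overline{K})=K$, $\mathsf{S}(L)=\overline{L}$, $\mathsf{S}(\overline{L})=L$, $\mathsf{S}(E)=-E(\overline{K}+\overline{L})$, $\mathsf{S}(F)=-(K+L)F$. Then for every $X\in U_{K,L,twist}$, $(\mathsf{id}\star\mathsf{S})(X)=(\mathsf{S}\star\mathsf{id})(X)=\varepsilon(X)\mathbf{1}$.
   Context: Fix $q\in\mathbb{C}$, $q\neq 0,\pm1$. $U_{K,L,twist}$ is the unital associative $\mathbb{C}$-algebra generated by $K,\overline{K},L,\overline{L},E,F$ subject to $K\overline{K}K=K$, $\overline{K}K\overline{K}=\overline{K}$, $K\overline{K}=\overline{K}K$, $L\overline{L}L=L$, $\overline{L}L\overline{L}=\overline{L}$, $L\overline{L}=\overline{L}L$, $K\overline{K}+L\overline{L}=\mathbf{1}$, $KE=q^2EL$, $LE=q^2EK$, $\overline{K}E=q^{-2}E\overline{L}$, $\overline{L}E=q^{-2}E\overline{K}$, $KF=q^{-2}FL$, $LF=q^{-2}FK$, $\overline{K}F=q^2F\overline{L}$, $\overline{L}F=q^2F\overline{K}$, $EF-FE=\frac{(K+L)-(\overline{K}+\overline{L})}{q-q^{-1}}$. It is a bialgebra with the algebra homomorphisms $\Delta,\varepsilon$ determined by $\Delta(K)=K\otimes K+L\otimes L$, $\Delta(\overline{K})=\overline{K}\otimes\overline{K}+\overline{L}\otimes\overline{L}$, $\Delta(L)=L\otimes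 K+K\otimes L$, $\Delta(\overline{L})=\overline{L}\otimes\overline{K}+\overline{K}\otimes\overline{L}$, $\Delta(E)=\mathbf{1}\otimes E+E\otimes(K+L)$, $\Delta(F)=F\otimes\mathbf{1}+(\overline{K}+\overline{L})\otimes F$, $\varepsilon(K)=\varepsilon(\overline{K})=1$, $\varepsilon(L)=\varepsilon(\overline{L})=\varepsilon(E)=\varepsilon(F)=0$. For linear maps $A,B$ of $U_{K,L,twist}$, the convolution is $A\star B=\mu\circ(A\otimes B)\circ\Delta$, where $\mu$ is the multiplication. *)

theory Defs
  imports Complex_Main
begin

text \<open>Elements of the free unital associative complex algebra are represented by
  syntax trees; the algebra U is the quotient of these trees by the smallest
  congruence (eqU q) containing the axioms of a unital associative C-algebra
  and the defining relations. Sc c stands for c times the unit.\<close>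

datatype gen = GK | GKb | GL | GLb | GE | GF

datatype uexpr = Gen gen | Sc complex | Add uexpr uexpr | Mul uexpr uexpr

abbreviation "uK \<equiv> Gen GK"
abbreviation "uKb \<equiv> Gen GKb"
abbreviation "uL \<equiv> Gen GL"
abbreviation "uLb \<equiv> Gen GLb"
abbreviation "uE \<equiv> Gen GE"
abbreviation "uF \<equiv> Gen GF"
abbreviation "uone \<equiv> Sc 1"

definition smul :: "complex \<Rightarrow> uexpr \<Rightarrow> uexpr" where
  "smul c x = Mul (Sc c) x"

definition uneg :: "uexpr \<Rightarrow> uexpr" where
  "uneg x = smul (-1) x"

definition usub :: "uexpr \<Rightarrow> uexpr \<Rightarrow> uexpr" where
  "usub x y = Add x (uneg y)"

inductive eqU :: "complex \<Rightarrow> uexpr \<Rightarrow> uexpr \<Rightarrow> bool" for q :: complex where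
  refl: "eqU q x x"
| sym: "eqU q x y \<Longrightarrow> eqU q y x"
| trans: "eqU q x y \<Longrightarrow> eqU q y z \<Longrightarrow> eqU q x z"
| add_cong: "eqU q x x' \<Longrightarrow> eqU q y y' \<Longrightarrow> eqU q (Add x y) (Add x' y')"
| mul_cong: "eqU q x x' \<Longrightarrow> eqU q y y' \<Longrightarrow> eqU q (Mul x y) (Mul x' y')"
| add_assoc: "eqU q (Add (Add x y) z) (Add x (Add y z))"
| add_comm: "eqU q (Add x y) (Add y x)"
| add_zero: "eqU q (Add (Sc 0) x) x"
| add_inv: "eqU q (Add x (Mul (Sc (-1)) x)) (Sc 0)"
| mul_assoc: "eqU q (Mul (Mul x y) z) (Mul x (Mul y z))"
| mul_one_left: "eqU q (Mul (Sc 1) x) x"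
| mul_one_right: "eqU q (Mul x (Sc 1)) x"
| distrib_left: "eqU q (Mul x (Add y z)) (Add (Mul x y) (Mul x z))"
| distrib_right: "eqU q (Mul (Add x y) z) (Add (Mul x z) (Mul y z))"
| sc_central: "eqU q (Mul (Sc c) x) (Mul x (Sc c))"
| sc_add: "eqU q (Add (Sc a) (Sc b)) (Sc (a + b))"
| sc_mul: "eqU q (Mul (Sc a) (Sc b)) (Sc (a * b))"
| r1: "eqU q (Mul (Mul uK uKb) uK) uK"
| r2: "eqU q (Mul (Mul uKb uK) uKb) uKb"
| r3: "eqU q (Mul uK uKb) (Mul uKb uK)"
| r4: "eqU q (Mul (Mul uL uLb) uL) uL"
| r5: "eqU q (Mul (Mul uLb uL) uLb) uLb"
| r6: "eqU q (Mul uL uLb) (Mul uLb uL)"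
| r7: "eqU q (Add (Mul uK uKb) (Mul uL uLb)) uone"
| r8: "eqU q (Mul uK uE) (smul (q^2) (Mul uE uL))"
| r9: "eqU q (Mul uL uE) (smul (q^2) (Mul uE uK))"
| r10: "eqU q (Mul uKb uE) (smul (inverse (q^2)) (Mul uE uLb))"
| r11: "eqU q (Mul uLb uE) (smul (inverse (q^2)) (Mul uE uKb))"
| r12: "eqU q (Mul uK uF) (smul (inverse (q^2)) (Mul uF uL))"
| r13: "eqU q (Mul uL uF) (smul (inverse (q^2)) (Mul uF uK))"
| r14: "eqU q (Mul uKb uF) (smul (q^2) (Mul uF uLb))"
| r15: "eqU q (Mul uLb uF) (smul (q^2) (Mul uF uKb))"
| r16: "eqU q (usub (Mul uE uF) (Mul uF uE))
          (smul (inverse (q - inverse q)) (usub (Add uK uL) (Add uKb uLb)))"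

text \<open>Coproduct, lifted to the free algebra; the value is a formal sum of
  simple tensors a \<otimes> b, represented as a list of pairs.\<close>

fun delta_gen :: "gen \<Rightarrow> (uexpr \<times> uexpr) list" where
  "delta_gen GK = [(uK, uK), (uL, uL)]"
| "delta_gen GKb = [(uKb, uKb), (uLb, uLb)]"
| "delta_gen GL = [(uL, uK), (uK, uL)]"
| "delta_gen GLb = [(uLb, uKb), (uKb, uLb)]"
| "delta_gen GE = [(uone, uE), (uE, Add uK uL)]"
| "delta_gen GF = [(uF, uone), (Add uKb uLb, uF)]"

fun delta :: "uexpr \<Rightarrow> (uexpr \<times> uexpr) list" where
  "delta (Gen g) = delta_gen g"
| "delta (Sc c) = [(Sc c, uone)]"
| "delta (Add a b) = delta a @ delta b"
| "delta (Mul a b) = [(Mul x1 x2, Mul y1 y2). (x1, y1) \<leftarrow> delta a, (x2, y2) \<leftarrow> delta b]"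

fun eps_gen :: "gen \<Rightarrow> complex" where
  "eps_gen GK = 1" | "eps_gen GKb = 1" | "eps_gen GL = 0" | "eps_gen GLb = 0"
| "eps_gen GE = 0" | "eps_gen GF = 0"

fun eps :: "uexpr \<Rightarrow> complex" where
  "eps (Gen g) = eps_gen g"
| "eps (Sc c) = c"
| "eps (Add a b) = eps a + eps b"
| "eps (Mul a b) = eps a * eps b"

fun S_gen :: "gen \<Rightarrow> uexpr" where
  "S_gen GK = uKb" | "S_gen GKb = uK" | "S_gen GL = uLb" | "S_gen GLb = uL"
| "S_gen GE = uneg (Mul uE (Add uKb uLb))"
| "S_gen GF = uneg (Mul (Add uK uL) uF)"

fun antipode :: "uexpr \<Rightarrow> uexpr" where
  "antipode (Gen g) = S_gen g"
| "antipode (Sc c) = Sc c"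
| "antipode (Add a b) = Add (antipode a) (antipode b)"
| "antipode (Mul a b) = Mul (antipode b) (antipode a)"

definition usum :: "uexpr list \<Rightarrow> uexpr" where
  "usum xs = foldr Add xs (Sc 0)"

definition conv_id_S :: "uexpr \<Rightarrow> uexpr" where
  "conv_id_S x = usum [Mul a (antipode b). (a, b) \<leftarrow> delta x]"

definition conv_S_id :: "uexpr \<Rightarrow> uexpr" where
  "conv_S_id x = usum [Mul (antipode a) b. (a, b) \<leftarrow> delta x]"

end

theory Submission
  imports Defs
begin

text \<open>
  Both convolutions are computed on the free algebra, so we prove
  the antipode identities for every syntax tree x by structural induction.
  \<^item> Formal sums usum behave like finite sums modulo eqU: they split over
    append and concat, are compatible with two-sided multiplication, and
    double sums can be interchanged.
  \<^item> Both convolutions are additive, because delta is.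
  \<^item> Both are multiplicative in the Hopf-algebraic sense: if (id * S)(b) is the
    scalar eps(b), then (id * S)(a b) = eps(b) (id * S)(a), since
    a1 b1 S(b2) S(a2) collapses in the middle; dually for (S * id).
  \<^item> On scalars the claim is immediate, and on the six generators it is a
    direct check using that K Kb and L Lb are complementary idempotents,
    whence K Lb = L Kb = Kb L = Lb K = 0 and (Kb + Lb)(K + L) = 1.
  The theorem then follows by induction.
\<close>

context fixes q :: complex begin

abbreviation eqq (infix "\<approx>" 50) where "x \<approx> y \<equiv> eqU q x y"

subsection \<open>Equational reasoning modulo the defining relations\<close>

lemma e_refl[simp]: "x \<approx> x" by (rule eqU.refl)
lemma e_sym: "x \<approx> y \<Longrightarrow> y \<approx> x" by (rule eqU.sym)
lemma e_trans[trans]: "x \<approx> y \<Longrightarrow> y \<approx> z \<Longrightarrow> x \<approx> z" by (rule eqU.trans)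
lemma addL: "x \<approx> x' \<Longrightarrow> Add x y \<approx> Add x' y" by (rule eqU.add_cong) auto
lemma addR: "y \<approx> y' \<Longrightarrow> Add x y \<approx> Add x y'" by (rule eqU.add_cong) auto
lemma mulL: "x \<approx> x' \<Longrightarrow> Mul x y \<approx> Mul x' y" by (rule eqU.mul_cong) auto
lemma mulR: "y \<approx> y' \<Longrightarrow> Mul x y \<approx> Mul x y'" by (rule eqU.mul_cong) auto

lemma add_zero_right: "Add x (Sc 0) \<approx> x"
  by (rule e_trans[OF eqU.add_comm eqU.add_zero])

lemma neg_add_cancel: "Add (Mul (Sc (-1)) x) x \<approx> Sc 0"
  by (rule e_trans[OF eqU.add_comm eqU.add_inv])

lemma add_left_absorb_zero: assumes "Add x y \<approx> y" shows "x \<approx> Sc 0"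
proof -
  have "x \<approx> Add x (Sc 0)" by (rule e_sym[OF add_zero_right])
  also have "\<dots> \<approx> Add x (Add y (Mul (Sc (-1)) y))" by (rule addR, rule e_sym, rule eqU.add_inv)
  also have "\<dots> \<approx> Add (Add x y) (Mul (Sc (-1)) y)" by (rule e_sym, rule eqU.add_assoc)
  also have "\<dots> \<approx> Add y (Mul (Sc (-1)) y)" by (rule addL, rule assms)
  also have "\<dots> \<approx> Sc 0" by (rule eqU.add_inv)
  finally show ?thesis .
qed

lemma mul_zero_left: "Mul (Sc 0) x \<approx> Sc 0"
proof (rule add_left_absorb_zero)
  have "Mul (Sc 0) x \<approx> Mul (Add (Sc 0) (Sc 0)) x" by (rule mulL, rule e_sym, rule eqU.add_zero)
  also have "\<dots> \<approx> Add (Mul (Sc 0) x) (Mul (Sc 0) x)" by (rule eqU.distrib_right)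
  finally show "Add (Mul (Sc 0) x) (Mul (Sc 0) x) \<approx> Mul (Sc 0) x" by (rule e_sym)
qed

lemma mul_zero_right: "Mul x (Sc 0) \<approx> Sc 0"
  by (rule e_trans[OF e_sym[OF eqU.sc_central] mul_zero_left])

lemma add_swap_middle: "Add (Add a b) (Add c d) \<approx> Add (Add a c) (Add b d)"
proof -
  have "Add (Add a b) (Add c d) \<approx> Add a (Add b (Add c d))" by (rule eqU.add_assoc)
  also have "\<dots> \<approx> Add a (Add (Add b c) d)" by (rule addR, rule e_sym, rule eqU.add_assoc)
  also have "\<dots> \<approx> Add a (Add (Add c b) d)" by (rule addR, rule addL, rule eqU.add_comm)
  also have "\<dots> \<approx> Add a (Add c (Add b d))" by (rule addR, rule eqU.add_assoc)
  also have "\<dots> \<approx> Add (Add a c) (Add b d)" by (rule e_sym, rule eqU.add_assoc)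
  finally show ?thesis .
qed

lemma mul_assoc4: "Mul (Mul a b) (Mul c d) \<approx> Mul (Mul a (Mul b c)) d"
proof -
  have "Mul (Mul a b) (Mul c d) \<approx> Mul (Mul (Mul a b) c) d" by (rule e_sym, rule eqU.mul_assoc)
  also have "\<dots> \<approx> Mul (Mul a (Mul b c)) d" by (rule mulL, rule eqU.mul_assoc)
  finally show ?thesis .
qed

lemma scalar_middle:
  assumes "x \<approx> Sc c" shows "Mul (Mul a x) d \<approx> Mul (Sc c) (Mul a d)"
proof -
  have "Mul (Mul a x) d \<approx> Mul (Mul a (Sc c)) d" by (rule mulL, rule mulR, rule assms)
  also have "\<dots> \<approx> Mul (Mul (Sc c) a) d" by (rule mulL, rule e_sym, rule eqU.sc_central)
  also have "\<dots> \<approx> Mul (Sc c) (Mul a d)" by (rule eqU.mul_assoc)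
  finally show ?thesis .
qed

lemma scalar_pull: "Mul x (Mul (Sc c) y) \<approx> Mul (Sc c) (Mul x y)"
proof -
  have "Mul x (Mul (Sc c) y) \<approx> Mul (Mul x (Sc c)) y" by (rule e_sym, rule eqU.mul_assoc)
  also have "\<dots> \<approx> Mul (Sc c) (Mul x y)" by (rule scalar_middle, rule e_refl)
  finally show ?thesis .
qed

subsection \<open>Formal sums\<close>

lemma usum_Nil[simp]: "usum [] = Sc 0" by (simp add: usum_def)
lemma usum_Cons[simp]: "usum (x # xs) = Add x (usum xs)" by (simp add: usum_def)

text \<open>Every generator has a two-term coproduct, so its convolutions are pair sums.\<close>
lemma usum_pair:
  "x \<approx> x' \<Longrightarrow> y \<approx> y' \<Longrightarrow> Add x' y' \<approx> c \<Longrightarrow> usum [x, y] \<approx> c"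
  by (simp, rule e_trans[OF addR[OF add_zero_right]], rule e_trans[OF eqU.add_cong]) auto

lemma usum_append: "usum (xs @ ys) \<approx> Add (usum xs) (usum ys)"
proof (induction xs)
  case Nil then show ?case by (simp add: e_sym[OF eqU.add_zero])
next
  case (Cons x xs)
  have "usum ((x # xs) @ ys) \<approx> Add x (Add (usum xs) (usum ys))" by (simp, rule addR, rule Cons)
  also have "\<dots> \<approx> Add (Add x (usum xs)) (usum ys)" by (rule e_sym, rule eqU.add_assoc)
  finally show ?case by simp
qed

lemma usum_concat: "usum (concat xss) \<approx> usum (map usum xss)"
proof (induction xss)
  case (Cons xs xss)
  have "usum (concat (xs # xss)) \<approx> Add (usum xs) (usum (concat xss))" by (simp add: usum_append)
  also have "\<dots> \<approx> Add (usum xs) (usum (map usum xss))" by (rule addR, rule Cons)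
  finally show ?case by simp
qed simp

lemma usum_concat_map: "usum (concat (map f xs)) \<approx> usum (map (\<lambda>z. usum (f z)) xs)"
  using usum_concat[of "map f xs"] by (simp add: comp_def)

lemma usum_cong:
  "(\<And>z. z \<in> set xs \<Longrightarrow> f z \<approx> g z) \<Longrightarrow> usum (map f xs) \<approx> usum (map g xs)"
  by (induction xs) (auto intro: eqU.add_cong)

lemma usum_mul_both: "usum (map (\<lambda>z. Mul (Mul u (h z)) w) xs) \<approx> Mul (Mul u (usum (map h xs))) w"
proof (induction xs)
  case Nil
  have "Mul (Mul u (Sc 0)) w \<approx> Mul (Sc 0) w" by (rule mulL, rule mul_zero_right)
  also have "\<dots> \<approx> Sc 0" by (rule mul_zero_left)
  finally show ?case by (simp add: e_sym)
next
  case (Cons a xs)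
  have "usum (map (\<lambda>z. Mul (Mul u (h z)) w) (a # xs))
      \<approx> Add (Mul (Mul u (h a)) w) (Mul (Mul u (usum (map h xs))) w)" by (simp, rule addR, rule Cons)
  also have "\<dots> \<approx> Mul (Add (Mul u (h a)) (Mul u (usum (map h xs)))) w" by (rule e_sym, rule eqU.distrib_right)
  also have "\<dots> \<approx> Mul (Mul u (Add (h a) (usum (map h xs)))) w" by (rule mulL, rule e_sym, rule eqU.distrib_left)
  finally show ?case by simp
qed

lemma usum_scalar: "usum (map (\<lambda>z. Mul (Sc c) (h z)) xs) \<approx> Mul (Sc c) (usum (map h xs))"
proof -
  have "usum (map (\<lambda>z. Mul (Sc c) (h z)) xs) \<approx> usum (map (\<lambda>z. Mul (Mul (Sc c) (h z)) (Sc 1)) xs)"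
    by (rule usum_cong, rule e_sym, rule eqU.mul_one_right)
  also have "\<dots> \<approx> Mul (Mul (Sc c) (usum (map h xs))) (Sc 1)" by (rule usum_mul_both)
  also have "\<dots> \<approx> Mul (Sc c) (usum (map h xs))" by (rule eqU.mul_one_right)
  finally show ?thesis .
qed

lemma usum_add: "Add (usum (map f xs)) (usum (map h xs)) \<approx> usum (map (\<lambda>w. Add (f w) (h w)) xs)"
proof (induction xs)
  case Nil then show ?case by (simp add: eqU.add_zero)
next
  case (Cons a xs)
  have "Add (usum (map f (a # xs))) (usum (map h (a # xs)))
      \<approx> Add (Add (f a) (h a)) (Add (usum (map f xs)) (usum (map h xs)))" by (simp add: add_swap_middle)
  also have "\<dots> \<approx> Add (Add (f a) (h a)) (usum (map (\<lambda>w. Add (f w) (h w)) xs))" by (rule addR, rule Cons)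
  finally show ?case by simp
qed

lemma usum_zeros: "usum (map (\<lambda>_. Sc 0) xs) \<approx> Sc 0"
  by (induction xs) (auto intro: e_trans[OF eqU.add_zero])

lemma usum_swap:
  "usum (map (\<lambda>z. usum (map (g z) ys)) xs) \<approx> usum (map (\<lambda>w. usum (map (\<lambda>z. g z w) xs)) ys)"
proof (induction xs)
  case Nil then show ?case by (simp add: e_sym[OF usum_zeros])
next
  case (Cons a xs)
  have "usum (map (\<lambda>z. usum (map (g z) ys)) (a # xs))
      \<approx> Add (usum (map (g a) ys)) (usum (map (\<lambda>w. usum (map (\<lambda>z. g z w) xs)) ys))"
    by (simp, rule addR, rule Cons)
  also have "\<dots> \<approx> usum (map (\<lambda>w. Add (g a w) (usum (map (\<lambda>z. g z w) xs))) ys)" by (rule usum_add)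
  finally show ?case by simp
qed

subsection \<open>The idempotents K Kb and L Lb\<close>

text \<open>For a regular pair (a b a = a, b a b = b, a b = b a) the idempotent a b
  is a two-sided unit for both a and b (the remaining case is the hypothesis a b a = a).\<close>
lemma regular_pair_absorb:
  assumes aba: "Mul (Mul a b) a \<approx> a" and bab: "Mul (Mul b a) b \<approx> b"
    and comm: "Mul a b \<approx> Mul b a"
  shows "Mul a (Mul a b) \<approx> a" and "Mul (Mul a b) b \<approx> b" and "Mul b (Mul a b) \<approx> b"
proof -
  have "Mul a (Mul a b) \<approx> Mul a (Mul b a)" by (rule mulR, rule comm)
  also have "\<dots> \<approx> Mul (Mul a b) a" by (rule e_sym, rule eqU.mul_assoc)
  finally show "Mul a (Mul a b) \<approx> a" using aba by (rule e_trans)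
  have "Mul (Mul a b) b \<approx> Mul (Mul b a) b" by (rule mulL, rule comm)
  then show "Mul (Mul a b) b \<approx> b" using bab by (rule e_trans)
  have "Mul b (Mul a b) \<approx> Mul (Mul b a) b" by (rule e_sym, rule eqU.mul_assoc)
  then show "Mul b (Mul a b) \<approx> b" using bab by (rule e_trans)
qed

lemmas K_absorb = regular_pair_absorb[OF eqU.r1 eqU.r2 eqU.r3]
lemmas L_absorb = regular_pair_absorb[OF eqU.r4 eqU.r5 eqU.r6]

lemma complementary_annihilate:
  assumes sum: "Add g h \<approx> Sc 1" and xh: "Mul x h \<approx> x" and gy: "Mul g y \<approx> y"
  shows "Mul x y \<approx> Sc 0"
proof -
  have "Add (Mul x g) x \<approx> x"
  proof -
    have "x \<approx> Mul x (Add g h)"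
      by (rule e_trans[OF e_sym[OF eqU.mul_one_right]], rule mulR, rule e_sym, rule sum)
    also have "\<dots> \<approx> Add (Mul x g) (Mul x h)" by (rule eqU.distrib_left)
    also have "\<dots> \<approx> Add (Mul x g) x" by (rule addR, rule xh)
    finally show ?thesis by (rule e_sym)
  qed
  then have xg: "Mul x g \<approx> Sc 0" by (rule add_left_absorb_zero)
  have "Mul x y \<approx> Mul x (Mul g y)" by (rule mulR, rule e_sym, rule gy)
  also have "\<dots> \<approx> Mul (Mul x g) y" by (rule e_sym, rule eqU.mul_assoc)
  also have "\<dots> \<approx> Mul (Sc 0) y" by (rule mulL, rule xg)
  also have "\<dots> \<approx> Sc 0" by (rule mul_zero_left)
  finally show ?thesis .
qed

lemma LLb_KKb_sum: "Add (Mul uL uLb) (Mul uK uKb) \<approx> Sc 1"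
  by (rule e_trans[OF eqU.add_comm eqU.r7])

lemma L_Kb: "Mul uL uKb \<approx> Sc 0"
  by (rule complementary_annihilate[OF eqU.r7 L_absorb(1) K_absorb(2)])
lemma Lb_K: "Mul uLb uK \<approx> Sc 0"
  by (rule complementary_annihilate[OF eqU.r7 L_absorb(3) eqU.r1])
lemma Kb_L: "Mul uKb uL \<approx> Sc 0"
  by (rule complementary_annihilate[OF LLb_KKb_sum K_absorb(3) eqU.r4])
lemma K_Lb: "Mul uK uLb \<approx> Sc 0"
  by (rule complementary_annihilate[OF LLb_KKb_sum K_absorb(1) L_absorb(2)])

text \<open>K + L is invertible with inverse Kb + Lb; this is what makes S(E) and
  S(F) work.\<close>
lemma KbLb_KL: "Mul (Add uKb uLb) (Add uK uL) \<approx> Sc 1"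
proof -
  have "Mul (Add uKb uLb) (Add uK uL) \<approx> Add (Mul uKb (Add uK uL)) (Mul uLb (Add uK uL))"
    by (rule eqU.distrib_right)
  also have "\<dots> \<approx> Add (Add (Mul uKb uK) (Mul uKb uL)) (Add (Mul uLb uK) (Mul uLb uL))"
    by (rule eqU.add_cong; rule eqU.distrib_left)
  also have "\<dots> \<approx> Add (Add (Mul uKb uK) (Sc 0)) (Add (Sc 0) (Mul uLb uL))"
    by (intro eqU.add_cong e_refl Kb_L Lb_K)
  also have "\<dots> \<approx> Add (Mul uKb uK) (Mul uLb uL)"
    by (rule eqU.add_cong, rule add_zero_right, rule eqU.add_zero)
  also have "\<dots> \<approx> Add (Mul uK uKb) (Mul uL uLb)" by (rule eqU.add_cong; rule e_sym; (rule eqU.r3 | rule eqU.r6))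
  also have "\<dots> \<approx> Sc 1" by (rule eqU.r7)
  finally show ?thesis .
qed

subsection \<open>Additivity and multiplicativity of the convolutions\<close>

lemma conv_id_S_map: "conv_id_S x = usum (map (\<lambda>(a, b). Mul a (antipode b)) (delta x))"
  by (simp add: conv_id_S_def)
lemma conv_S_id_map: "conv_S_id x = usum (map (\<lambda>(a, b). Mul (antipode a) b) (delta x))"
  by (simp add: conv_S_id_def)
lemma delta_Mul_concat:
  "delta (Mul a b) = concat (map (\<lambda>(x1, y1). map (\<lambda>(x2, y2). (Mul x1 x2, Mul y1 y2)) (delta b)) (delta a))"
  by (simp add: split_def)

lemma conv_id_S_Add: "conv_id_S (Add a b) \<approx> Add (conv_id_S a) (conv_id_S b)"
  unfolding conv_id_S_map using usum_append by simp
lemma conv_S_id_Add: "conv_S_id (Add a b) \<approx> Add (conv_S_id a) (conv_S_id b)"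
  unfolding conv_S_id_map using usum_append by simp

text \<open>(id * S)(a b) = sum a1 b1 S(b2) S(a2); the inner sum over delta b is
  (id * S)(b), so a scalar value there factors out.\<close>
lemma conv_id_S_Mul:
  assumes b: "conv_id_S b \<approx> Sc (eps b)"
  shows "conv_id_S (Mul a b) \<approx> Mul (Sc (eps b)) (conv_id_S a)"
proof -
  let ?F = "\<lambda>(a, b). Mul a (antipode b)"
  have "conv_id_S (Mul a b) = usum (concat (map (\<lambda>(x1, y1). map (\<lambda>(x2, y2).
      Mul (Mul x1 x2) (Mul (antipode y2) (antipode y1))) (delta b)) (delta a)))"
    unfolding conv_id_S_map delta_Mul_concat by (simp add: map_concat split_def comp_def)
  also have "\<dots> \<approx> usum (map (\<lambda>(x1, y1). usum (map (\<lambda>(x2, y2).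
      Mul (Mul x1 x2) (Mul (antipode y2) (antipode y1))) (delta b))) (delta a))"
    by (rule e_trans[OF usum_concat_map usum_cong]) auto
  also have "\<dots> \<approx> usum (map (\<lambda>z. Mul (Sc (eps b)) (?F z)) (delta a))"
  proof (rule usum_cong, clarify)
    fix x1 y1
    have "usum (map (\<lambda>(x2, y2). Mul (Mul x1 x2) (Mul (antipode y2) (antipode y1))) (delta b))
        \<approx> usum (map (\<lambda>w. Mul (Mul x1 (?F w)) (antipode y1)) (delta b))"
      by (rule usum_cong, clarsimp, rule mul_assoc4)
    also have "\<dots> \<approx> Mul (Mul x1 (conv_id_S b)) (antipode y1)"
      unfolding conv_id_S_map by (rule usum_mul_both)
    also have "\<dots> \<approx> Mul (Sc (eps b)) (Mul x1 (antipode y1))" by (rule scalar_middle, rule b)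
    finally show "usum (map (\<lambda>(x2, y2). Mul (Mul x1 x2) (Mul (antipode y2) (antipode y1))) (delta b))
        \<approx> Mul (Sc (eps b)) (Mul x1 (antipode y1))" .
  qed
  also have "\<dots> \<approx> Mul (Sc (eps b)) (conv_id_S a)" unfolding conv_id_S_map by (rule usum_scalar)
  finally show ?thesis .
qed

text \<open>Dually, (S * id)(a b) = sum S(b1) S(a1) a2 b2; after interchanging the
  double sum the inner sum over delta a is (S * id)(a).\<close>
lemma conv_S_id_Mul:
  assumes a: "conv_S_id a \<approx> Sc (eps a)"
  shows "conv_S_id (Mul a b) \<approx> Mul (Sc (eps a)) (conv_S_id b)"
proof -
  let ?F = "\<lambda>(a, b). Mul (antipode a) b"
  define g where "g = (\<lambda>(x1, y1) (x2, y2). Mul (Mul (antipode x2) (antipode x1)) (Mul y1 y2))"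
  have "conv_S_id (Mul a b) = usum (concat (map (\<lambda>z. map (g z) (delta b)) (delta a)))"
    unfolding conv_S_id_map delta_Mul_concat g_def by (simp add: map_concat split_def comp_def)
  also have "\<dots> \<approx> usum (map (\<lambda>z. usum (map (g z) (delta b))) (delta a))"
    by (rule usum_concat_map)
  also have "\<dots> \<approx> usum (map (\<lambda>w. usum (map (\<lambda>z. g z w) (delta a))) (delta b))" by (rule usum_swap)
  also have "\<dots> \<approx> usum (map (\<lambda>w. Mul (Sc (eps a)) (?F w)) (delta b))"
  proof (rule usum_cong, clarify)
    fix x2 y2
    have "usum (map (\<lambda>z. g z (x2, y2)) (delta a))
        \<approx> usum (map (\<lambda>z. Mul (Mul (antipode x2) (?F z)) y2) (delta a))"
      by (rule usum_cong, clarsimp simp: g_def, rule mul_assoc4)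
    also have "\<dots> \<approx> Mul (Mul (antipode x2) (conv_S_id a)) y2"
      unfolding conv_S_id_map by (rule usum_mul_both)
    also have "\<dots> \<approx> Mul (Sc (eps a)) (Mul (antipode x2) y2)" by (rule scalar_middle, rule a)
    finally show "usum (map (\<lambda>z. g z (x2, y2)) (delta a)) \<approx> Mul (Sc (eps a)) (Mul (antipode x2) y2)" .
  qed
  also have "\<dots> \<approx> Mul (Sc (eps a)) (conv_S_id b)" unfolding conv_S_id_map by (rule usum_scalar)
  finally show ?thesis .
qed

subsection \<open>The generators\<close>

lemma S_E_times_KL: "Mul (Mul (Sc (-1)) (Mul uE (Add uKb uLb))) (Add uK uL) \<approx> Mul (Sc (-1)) uE"
proof -
  have "Mul (Mul (Sc (-1)) (Mul uE (Add uKb uLb))) (Add uK uL)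
      \<approx> Mul (Sc (-1)) (Mul uE (Mul (Add uKb uLb) (Add uK uL)))"
    by (rule e_trans[OF eqU.mul_assoc], rule mulR, rule eqU.mul_assoc)
  also have "\<dots> \<approx> Mul (Sc (-1)) (Mul uE (Sc 1))" by (rule mulR, rule mulR, rule KbLb_KL)
  also have "\<dots> \<approx> Mul (Sc (-1)) uE" by (rule mulR, rule eqU.mul_one_right)
  finally show ?thesis .
qed

lemma KbLb_times_S_F: "Mul (Add uKb uLb) (Mul (Sc (-1)) (Mul (Add uK uL) uF)) \<approx> Mul (Sc (-1)) uF"
proof -
  have "Mul (Add uKb uLb) (Mul (Sc (-1)) (Mul (Add uK uL) uF))
      \<approx> Mul (Sc (-1)) (Mul (Mul (Add uKb uLb) (Add uK uL)) uF)"
    by (rule e_trans[OF scalar_pull], rule mulR, rule e_sym, rule eqU.mul_assoc)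
  also have "\<dots> \<approx> Mul (Sc (-1)) (Mul (Sc 1) uF)" by (rule mulR, rule mulL, rule KbLb_KL)
  also have "\<dots> \<approx> Mul (Sc (-1)) uF" by (rule mulR, rule eqU.mul_one_left)
  finally show ?thesis .
qed

lemma conv_Gen:
  "conv_id_S (Gen g) \<approx> Sc (eps (Gen g)) \<and> conv_S_id (Gen g) \<approx> Sc (eps (Gen g))"
proof (cases g)
  case GK then show ?thesis
    by (simp add: conv_id_S_def conv_S_id_def del: usum_Cons)
       (intro conjI usum_pair[OF e_refl e_refl eqU.r7]
          usum_pair[OF e_sym[OF eqU.r3] e_sym[OF eqU.r6] eqU.r7])
next
  case GKb then show ?thesis
    by (simp add: conv_id_S_def conv_S_id_def del: usum_Cons)
       (intro conjI usum_pair[OF e_refl e_refl eqU.r7]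
          usum_pair[OF e_sym[OF eqU.r3] e_sym[OF eqU.r6] eqU.r7])
next
  case GL then show ?thesis
    by (simp add: conv_id_S_def conv_S_id_def del: usum_Cons)
       (intro conjI usum_pair[OF L_Kb K_Lb eqU.add_zero] usum_pair[OF Lb_K Kb_L eqU.add_zero])
next
  case GLb then show ?thesis
    by (simp add: conv_id_S_def conv_S_id_def del: usum_Cons)
       (intro conjI usum_pair[OF L_Kb K_Lb eqU.add_zero] usum_pair[OF Lb_K Kb_L eqU.add_zero])
next
  case GE then show ?thesis
    by (simp add: conv_id_S_def conv_S_id_def uneg_def smul_def del: usum_Cons)
       (intro conjI usum_pair[OF eqU.mul_one_left e_refl neg_add_cancel]
          usum_pair[OF eqU.mul_one_left S_E_times_KL eqU.add_inv])
next
  case GF then show ?thesis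
    by (simp add: conv_id_S_def conv_S_id_def uneg_def smul_def del: usum_Cons)
       (intro conjI usum_pair[OF eqU.mul_one_right KbLb_times_S_F eqU.add_inv]
          usum_pair[OF eqU.mul_one_right e_refl neg_add_cancel])
qed

lemma antipode_identities:
  "conv_id_S x \<approx> Sc (eps x) \<and> conv_S_id x \<approx> Sc (eps x)"
proof (induction x)
  case (Gen g) show ?case by (rule conv_Gen)
next
  case (Sc c) show ?case
    by (simp add: conv_id_S_def conv_S_id_def e_trans[OF add_zero_right eqU.mul_one_right])
next
  case (Add a b)
  then show ?case
    by (auto intro: e_trans[OF conv_id_S_Add] e_trans[OF conv_S_id_Add]
                    e_trans[OF eqU.add_cong eqU.sc_add])
next
  case (Mul a b)
  then have "conv_id_S (Mul a b) \<approx> Mul (Sc (eps b)) (Sc (eps a))"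
    and "conv_S_id (Mul a b) \<approx> Mul (Sc (eps a)) (Sc (eps b))"
    by (auto intro: e_trans[OF conv_id_S_Mul] e_trans[OF conv_S_id_Mul] mulR)
  then show ?case
    using eqU.sc_mul[of q "eps b" "eps a"] eqU.sc_mul[of q "eps a" "eps b"]
    by (auto intro: e_trans simp: mult.commute)
qed

end

theorem proposition10:
  fixes q :: complex
  assumes "q \<noteq> 0" and "q \<noteq> 1" and "q \<noteq> -1"
  shows "\<forall>x. eqU q (conv_id_S x) (Sc (eps x)) \<and> eqU q (conv_S_id x) (Sc (eps x))"
  using antipode_identities by blast

end
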